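(* If $f(z)=\sum_{k=1}^\infty b_k z^k$ is analytic in $\mathbb{D}$ with $\|f\|_{\mathcal{B}}\le 1$, then $$ \sum_{k=1}^n k|b_k|^2\le \frac{n^n}{(n-1)^{n-1}} \quad\text{for all } n\ge 2. $$ Moreover, $$ \frac{32}{27}\, nB_n^2\le \frac{n^n}{(n-1)^{n-1}}\le \frac{4}{e}\, nB_n^2 \quad\text{for all } n\ge 2. $$
   Context: $\mathbb{D}$ is the open unit disc. The Bloch space $\mathcal{B}$ consists of analytic functions $f$ on $\mathbb{D}$ with finite norm $\|f\|_{\mathcal{B}}=|f(0)|+\sup_{z\in\mathbb{D}}(1-|z|^2)|f'(z)|$. For $n\ge 2$, $B_n=\frac{n+1}{2n}\left(\frac{n+1}{n-1}\right)^{(n-1)/2}$. *)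

theory Defs
  imports "HOL-Complex_Analysis.Complex_Analysis"
begin

definition bloch_space :: "(complex \<Rightarrow> complex) set" where
  "bloch_space = {f. f holomorphic_on ball 0 1 \<and>
     bdd_above ((\<lambda>z. (1 - (cmod z)^2) * cmod (deriv f z)) ` ball 0 1)}"

definition bloch_norm :: "(complex \<Rightarrow> complex) \<Rightarrow> real" where
  "bloch_norm f = cmod (f 0) + (SUP z\<in>ball 0 1. (1 - (cmod z)^2) * cmod (deriv f z))"

definition B_const :: "nat \<Rightarrow> real" where
  "B_const n = (real n + 1) / (2 * real n) * ((real n + 1) / (real n - 1)) powr ((real n - 1) / 2)"

end

theory Submission
  imports Defs
begin

(* On the circle |z| = r the derivative f'(z) = sum k b_k z^(k-1) is bounded by 1/(1 - r^2), so
   Gutzmer's inequality (obtained from the discrete Parseval identity at the m-th roots of unity,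
   letting m tend to infinity) gives sum k^2 |b_k|^2 x^(k-1) <= 1/(1 - x)^2 for 0 <= x < 1.
   Integrating from 0 to t yields sum k |b_k|^2 t^k <= t/(1 - t), and t = 1 - 1/n gives the
   first bound. For the second, n^n/(n - 1)^(n-1) = 4 (n/(n + 1))^(n+1) n B_n^2, and
   (n/(n + 1))^(n+1) increases from 8/27 at n = 2 to its limit 1/e. *)

lemma sum_cis_orthogonality:
  assumes "j < m" "k < m"
  shows "(\<Sum>s<m. cis (2*pi*real (s*j)/m) * cnj (cis (2*pi*real (s*k)/m)))
           = (if j = k then of_nat m else 0)"
proof -
  define w where "w = cis (2*pi*j/m) / cis (2*pi*k/m)"
  have "cis (2*pi*real (s*j)/m) * cnj (cis (2*pi*real (s*k)/m)) = w ^ s" for s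
  proof -
    have "w ^ s = cis (2*pi*real (s*j)/m + - (2*pi*real (s*k)/m))"
      by (simp add: w_def cis_divide Complex.DeMoivre algebra_simps diff_divide_distrib)
    then show ?thesis by (simp add: cis_mult cis_cnj)
  qed
  then have sum_eq: "(\<Sum>s<m. cis (2*pi*real (s*j)/m) * cnj (cis (2*pi*real (s*k)/m)))
                       = (\<Sum>s<m. w ^ s)"
    by simp
  show ?thesis
  proof (cases "j = k")
    case True
    then show ?thesis unfolding sum_eq by (simp add: w_def)
  next
    case False
    have m: "m > 0" using assms by simp
    have "cis (2*pi*j/m) \<noteq> cis (2*pi*k/m)"
      using Complex.bij_betw_roots_unity[OF m] assms False by (auto simp: bij_betw_def inj_on_def)
    then have "w \<noteq> 1" by (simp add: w_def)
    moreover have "w ^ m = cis (2*pi*real j) / cis (2*pi*real k)"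
      using m by (simp add: w_def power_divide Complex.DeMoivre)
    then have "w ^ m = 1" by simp
    ultimately show ?thesis using False unfolding sum_eq by (simp add: geometric_sum)
  qed
qed

lemma discrete_Parseval:
  fixes a :: "nat \<Rightarrow> complex"
  assumes "m > 0"
  shows "(\<Sum>s<m. (cmod (\<Sum>j<m. a j * cis (2*pi*real (s*j)/m)))^2)
           = real m * (\<Sum>j<m. (cmod (a j))^2)"
proof -
  define e where "e s j = cis (2*pi*real (s*j)/m)" for s j
  have "complex_of_real (\<Sum>s<m. (cmod (\<Sum>j<m. a j * e s j))^2)
      = (\<Sum>s<m. (\<Sum>j<m. a j * e s j) * cnj (\<Sum>k<m. a k * e s k))"
    by (simp only: of_real_sum complex_norm_square)
  also have "\<dots> = (\<Sum>s<m. \<Sum>j<m. \<Sum>k<m. a j * cnj (a k) * (e s j * cnj (e s k)))"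
    by (simp only: cnj_sum sum_product complex_cnj_mult) (simp add: mult_ac)
  also have "\<dots> = (\<Sum>j<m. \<Sum>k<m. a j * cnj (a k) * (\<Sum>s<m. e s j * cnj (e s k)))"
    by (subst sum.swap, rule sum.cong[OF refl], subst sum.swap) (simp add: sum_distrib_left)
  also have "\<dots> = (\<Sum>j<m. \<Sum>k<m. a j * cnj (a k) * (if j = k then of_nat m else 0))"
    unfolding e_def by (intro sum.cong refl arg_cong2[where f="(*)"] sum_cis_orthogonality) auto
  also have "\<dots> = (\<Sum>j<m. of_nat m * (a j * cnj (a j)))"
    by (simp add: if_distrib mult_ac cong: if_cong)
  also have "\<dots> = complex_of_real (real m * (\<Sum>j<m. (cmod (a j))^2))"
    by (simp add: sum_distrib_left complex_norm_square[symmetric])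
  finally show ?thesis unfolding e_def by (simp only: of_real_eq_iff)
qed

lemma norm_power_series_partial_sum_le:
  fixes c :: "nat \<Rightarrow> 'a :: {real_normed_field, banach}"
  assumes sm: "summable (\<lambda>j. norm (c j) * norm z ^ j)"
    and bd: "norm (\<Sum>j. c j * z ^ j) \<le> M"
  shows "norm (\<Sum>j<m. c j * z ^ j) \<le> M + (\<Sum>j. norm (c (j + m)) * norm z ^ (j + m))"
proof -
  have norm_term: "norm (c j * z ^ j) = norm (c j) * norm z ^ j" for j
    by (simp add: norm_mult norm_power)
  have sm_tail: "summable (\<lambda>j. norm (c (j + m) * z ^ (j + m)))"
    unfolding norm_term by (rule summable_ignore_initial_segment[OF sm])
  have "(\<Sum>j<m. c j * z ^ j) = (\<Sum>j. c j * z ^ j) - (\<Sum>j. c (j + m) * z ^ (j + m))"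
    using suminf_split_initial_segment[OF summable_norm_cancel, of "\<lambda>j. c j * z ^ j" m] sm
    by (simp add: norm_term)
  also have "norm \<dots> \<le> norm (\<Sum>j. c j * z ^ j) + norm (\<Sum>j. c (j + m) * z ^ (j + m))"
    by (rule norm_triangle_ineq4)
  also have "norm (\<Sum>j. c (j + m) * z ^ (j + m)) \<le> (\<Sum>j. norm (c (j + m)) * norm z ^ (j + m))"
    using summable_norm[OF sm_tail] by (simp add: norm_term)
  finally show ?thesis using bd by simp
qed

lemma Gutzmer_inequality:
  fixes c :: "nat \<Rightarrow> complex"
  assumes r: "r \<ge> 0" and sm: "summable (\<lambda>j. cmod (c j) * r ^ j)"
    and bd: "\<And>z. cmod z = r \<Longrightarrow> cmod (\<Sum>j. c j * z ^ j) \<le> M"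
  shows "(\<Sum>j<N. (cmod (c j))^2 * r ^ (2*j)) \<le> M^2"
proof -
  define S where "S m = (\<Sum>j<m. (cmod (c j))^2 * r ^ (2*j))" for m
  define tail where "tail m = (\<Sum>j. cmod (c (j + m)) * r ^ (j + m))" for m
  have "tail = (\<lambda>m. (\<Sum>j. cmod (c j) * r ^ j) - (\<Sum>j<m. cmod (c j) * r ^ j))"
    unfolding tail_def by (intro ext) (metis add_diff_cancel_right' suminf_split_initial_segment[OF sm])
  then have tail_lim: "tail \<longlonglongrightarrow> 0"
    using tendsto_diff[OF tendsto_const summable_LIMSEQ[OF sm], of "\<Sum>j. cmod (c j) * r ^ j"] by simp
  have S_le: "S m \<le> (M + tail m)^2" if m: "m > 0" for m
  proof -
    define z where "z s = complex_of_real r * cis (2*pi*real s/m)" for s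
    have norm_z: "cmod (z s) = r" for s
      using r by (simp add: z_def norm_mult)
    have "cis (2*pi*real s/m) ^ j = cis (2*pi*real (s*j)/m)" for s j
      by (simp add: Complex.DeMoivre algebra_simps)
    then have partial_sum:
        "(\<Sum>j<m. c j * z s ^ j) = (\<Sum>j<m. (c j * of_real r ^ j) * cis (2*pi*real (s*j)/m))" for s
      by (simp add: z_def power_mult_distrib mult_ac)
    have "real m * S m = (\<Sum>s<m. (cmod (\<Sum>j<m. c j * z s ^ j))^2)"
      unfolding partial_sum discrete_Parseval[OF m] S_def
      by (simp add: norm_mult norm_power power_mult_distrib power_mult abs_of_nonneg r mult_ac)
    also have "\<dots> \<le> (\<Sum>s<m. (M + tail m)^2)"
      using norm_power_series_partial_sum_le[of c "z s" M m for s] sm bd norm_z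
      by (intro sum_mono power_mono) (simp_all add: tail_def)
    also have "\<dots> = real m * (M + tail m)^2" by simp
    finally show ?thesis using m by simp
  qed
  have "S N \<le> (M + tail m)^2" if "m \<ge> max N 1" for m
    using S_le[of m] that sum_mono2[of "{..<m}" "{..<N}" "\<lambda>j. (cmod (c j))^2 * r ^ (2*j)"]
    by (simp add: S_def)
  moreover have "(\<lambda>m. (M + tail m)^2) \<longlonglongrightarrow> (M + 0)^2"
    by (intro tendsto_intros tail_lim)
  ultimately have "S N \<le> (M + 0)^2"
    by (intro LIMSEQ_le_const[of "\<lambda>m. (M + tail m)^2"]) (auto intro!: exI[of _ "max N 1"])
  then show ?thesis by (simp add: S_def)
qed

lemma bloch_norm_ge:
  assumes "f \<in> bloch_space" "z \<in> ball 0 1"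
  shows "cmod (f 0) + (1 - (cmod z)^2) * cmod (deriv f z) \<le> bloch_norm f"
  using cSUP_upper[OF assms(2), of "\<lambda>z. (1 - (cmod z)^2) * cmod (deriv f z)"] assms(1)
  by (simp add: bloch_norm_def bloch_space_def)

lemma deriv_eq_power_series_diffs:
  assumes sums: "\<And>z. z \<in> ball 0 1 \<Longrightarrow> (\<lambda>k. b k * z ^ k) sums f z"
    and z: "cmod z < 1"
  shows "deriv f z = (\<Sum>n. diffs b n * z ^ n)"
proof -
  have "((\<lambda>z. \<Sum>n. b n * z ^ n) has_field_derivative (\<Sum>n. diffs b n * z ^ n)) (at z)"
    using sums z by (intro termdiffs_strong'[of 1]) (auto simp: sums_iff)
  then have "(f has_field_derivative (\<Sum>n. diffs b n * z ^ n)) (at z)"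
    by (rule has_field_derivative_transform_within_open[of _ _ _ "ball 0 1"])
       (use z sums in \<open>auto simp: sums_iff\<close>)
  then show ?thesis by (rule DERIV_imp_deriv)
qed

lemma bloch_diffs_square_sum_le:
  assumes sums: "\<And>z. z \<in> ball 0 1 \<Longrightarrow> (\<lambda>k. b k * z ^ k) sums f z"
    and bloch: "\<And>z. z \<in> ball 0 1 \<Longrightarrow> (1 - (cmod z)^2) * cmod (deriv f z) \<le> 1"
    and x: "0 \<le> x" "x < 1"
  shows "(\<Sum>j<N. (cmod (diffs b j))^2 * x ^ j) \<le> (1 / (1 - x))^2"
proof -
  define r where "r = sqrt x"
  have r: "0 \<le> r" "r < 1" "r^2 = x" using x by (auto simp: r_def)
  have "summable (\<lambda>n. diffs b n * w ^ n)" if "norm w < 1" for w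
    using sums that by (intro termdiff_converges[of w 1]) (auto simp: sums_iff)
  moreover have "cmod (complex_of_real ((1 + r) / 2)) = (1 + r) / 2"
    using r by (simp only: norm_of_real) simp
  ultimately have "summable (\<lambda>j. norm (diffs b j * of_real r ^ j))"
    using r by (intro powser_insidea[of _ "of_real ((1 + r) / 2)"]) auto
  then have summable: "summable (\<lambda>j. cmod (diffs b j) * r ^ j)"
    using r by (simp add: norm_mult norm_power)
  have "cmod (\<Sum>j. diffs b j * z ^ j) \<le> 1 / (1 - x)" if "cmod z = r" for z
  proof -
    have "(1 - x) * cmod (deriv f z) \<le> 1" using bloch[of z] that r by auto
    then show ?thesis
      using deriv_eq_power_series_diffs[OF sums, of z] that r x by (simp add: field_simps)
  qed
  from Gutzmer_inequality[OF r(1) summable this]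
  show ?thesis using r by (simp add: power_mult)
qed

lemma sum_power_le_of_deriv_le:
  fixes d :: "nat \<Rightarrow> real"
  assumes deriv_le:
      "\<And>x. 0 \<le> x \<Longrightarrow> x < 1 \<Longrightarrow> (\<Sum>j<n. real (Suc j) * d j * x ^ j) \<le> 1 / (1 - x)^2"
    and t: "0 \<le> t" "t < 1"
  shows "(\<Sum>j<n. d j * t ^ Suc j) \<le> t / (1 - t)"
proof -
  define H where "H = (\<lambda>x. x / (1 - x) - (\<Sum>j<n. d j * x ^ Suc j))"
  have H_deriv: "x \<noteq> 1 \<Longrightarrow>
      (H has_real_derivative 1 / (1 - x)^2 - (\<Sum>j<n. real (Suc j) * d j * x ^ j)) (at x)" for x
    unfolding H_def
    by (rule derivative_eq_intros refl DERIV_pow | simp)+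
       (simp_all add: power2_eq_square divide_simps mult_ac)
  have "H 0 \<le> H t"
  proof (rule DERIV_nonneg_imp_nondecreasing[OF t(1)])
    fix x assume x: "0 \<le> x" "x \<le> t"
    have "(H has_real_derivative 1 / (1 - x)^2 - (\<Sum>j<n. real (Suc j) * d j * x ^ j)) (at x)"
      using x t by (intro H_deriv) simp
    moreover have "0 \<le> 1 / (1 - x)^2 - (\<Sum>j<n. real (Suc j) * d j * x ^ j)"
      using deriv_le[of x] x t by simp
    ultimately show "\<exists>y. (H has_real_derivative y) (at x) \<and> 0 \<le> y" by blast
  qed
  then show ?thesis by (simp add: H_def)
qed

lemma bloch_weighted_coeff_power_sum_le:
  assumes sums: "\<And>z. z \<in> ball 0 1 \<Longrightarrow> (\<lambda>k. b k * z ^ k) sums f z"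
    and bloch: "\<And>z. z \<in> ball 0 1 \<Longrightarrow> (1 - (cmod z)^2) * cmod (deriv f z) \<le> 1"
    and t: "0 \<le> t" "t < 1"
  shows "(\<Sum>k=1..n. real k * (cmod (b k))^2 * t ^ k) \<le> t / (1 - t)"
proof -
  define d where "d j = real (Suc j) * (cmod (b (Suc j)))^2" for j
  have "(cmod (diffs b j))^2 = real (Suc j) * d j" for j
    unfolding diffs_def d_def norm_mult norm_of_nat by (simp add: power2_eq_square)
  then have "(\<Sum>j<n. real (Suc j) * d j * x ^ j) \<le> 1 / (1 - x)^2" if "0 \<le> x" "x < 1" for x
    using bloch_diffs_square_sum_le[OF sums bloch that, of n] by (simp add: power_divide)
  from sum_power_le_of_deriv_le[OF this t] show ?thesis
    by (simp add: d_def sum.atLeast1_atMost_eq mult_ac)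
qed

lemma bloch_weighted_coeff_sum_le:
  assumes sums: "\<And>z. z \<in> ball 0 1 \<Longrightarrow> (\<lambda>k. b k * z ^ k) sums f z"
    and bloch: "\<And>z. z \<in> ball 0 1 \<Longrightarrow> (1 - (cmod z)^2) * cmod (deriv f z) \<le> 1"
    and n: "n \<ge> 2"
  shows "(\<Sum>k=1..n. real k * (cmod (b k))^2) \<le> real n ^ n / (real n - 1) ^ (n - 1)"
proof -
  define t where "t = (real n - 1) / real n"
  have t: "0 < t" "t < 1" using n by (auto simp: t_def)
  have "(\<Sum>k=1..n. real k * (cmod (b k))^2) * t ^ n
      \<le> (\<Sum>k=1..n. real k * (cmod (b k))^2 * t ^ k)"
    unfolding sum_distrib_right using t by (intro sum_mono mult_left_mono power_decreasing) auto
  also have "\<dots> \<le> t / (1 - t)"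
    using t by (intro bloch_weighted_coeff_power_sum_le[OF sums bloch]) simp_all
  also have "\<dots> = real n - 1"
    using n by (simp add: t_def field_simps)
  also have "\<dots> = (real n ^ n / (real n - 1) ^ (n - 1)) * t ^ n"
  proof -
    have "(real n - 1) ^ n = (real n - 1) * (real n - 1) ^ (n - 1)"
      using power_Suc[of "real n - 1" "n - 1"] n by simp
    then show ?thesis using n by (simp add: t_def power_divide)
  qed
  finally show ?thesis
    by (rule mult_right_le_imp_le[OF _ zero_less_power[OF t(1)]])
qed

lemma power_ratio_le_Suc:
  "(real n / (real n + 1)) ^ (n + 1) \<le> (real (Suc n) / (real (Suc n) + 1)) ^ (Suc n + 1)"
proof (cases "n = 0")
  case False
  define N where "N = real n"
  have N: "N > 0" using False by (simp add: N_def)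
  define x where "x = 1 / (N * (N + 2))"
  have x: "x \<ge> 0" using N by (simp add: x_def)
  have nonzero: "N \<noteq> 0" "N + 1 \<noteq> 0" "N + 2 \<noteq> 0" using N by simp_all
  have ratio: "(N + 1) / (N + 2) = N / (N + 1) * (1 + x)"
    using nonzero by (simp add: x_def divide_simps) (simp add: algebra_simps)
  have "1 \<le> (1 + (N + 1) * x) * ((N + 1) / (N + 2))"
    using N by (simp add: x_def divide_simps) (simp add: algebra_simps)
  also have "\<dots> \<le> (1 + x) ^ (n + 1) * ((N + 1) / (N + 2))"
    using Bernoulli_inequality[of x "n + 1"] x N
    by (intro mult_right_mono) (simp_all add: N_def add.commute)
  finally have "(N / (N + 1)) ^ (n + 1) * 1
      \<le> (N / (N + 1)) ^ (n + 1) * ((1 + x) ^ (n + 1) * ((N + 1) / (N + 2)))"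
    using N by (intro mult_left_mono) simp_all
  also have "\<dots> = ((N + 1) / (N + 2)) ^ (n + 1) * ((N + 1) / (N + 2))"
    by (simp only: ratio power_mult_distrib mult_ac)
  finally show ?thesis by (simp add: N_def add_ac mult_ac)
qed simp

lemma power_ratio_ge_8_27:
  assumes "n \<ge> 2"
  shows "8 / 27 \<le> (real n / (real n + 1)) ^ (n + 1)"
proof -
  have "incseq (\<lambda>n. (real n / (real n + 1)) ^ (n + 1))"
    by (rule incseq_SucI) (rule power_ratio_le_Suc)
  from incseqD[OF this assms] show ?thesis by (simp add: power_divide)
qed

lemma power_ratio_le_exp_minus_1: "(real n / (real n + 1)) ^ (n + 1) \<le> exp (- 1)"
proof -
  have "real n / (real n + 1) \<le> exp (- 1 / (real n + 1))"
    using exp_ge_add_one_self[of "- 1 / (real n + 1)"] by (simp add: field_simps)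
  then have "(real n / (real n + 1)) ^ (n + 1) \<le> exp (- 1 / (real n + 1)) ^ (n + 1)"
    by (intro power_mono) auto
  also have "\<dots> = exp (real (n + 1) * (- 1 / (real n + 1)))"
    by (simp only: exp_of_nat_mult)
  also have "real (n + 1) * (- 1 / (real n + 1)) = - 1"
    by (simp add: field_simps)
  finally show ?thesis .
qed

lemma B_const_square_identity:
  assumes "n \<ge> 2"
  shows "real n ^ n / (real n - 1) ^ (n - 1)
           = 4 * (real n / (real n + 1)) ^ (n + 1) * (real n * (B_const n)^2)"
proof -
  define A where "A = real n ^ n"
  define P where "P = (real n + 1) ^ (n - 1)"
  define Q where "Q = (real n - 1) ^ (n - 1)"
  have pos: "real n > 0" "P > 0" "Q > 0" using assms by (simp_all add: P_def Q_def)
  have "(B_const n)^2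
      = ((real n + 1) / (2 * real n))^2 * ((real n + 1) / (real n - 1)) powr (real n - 1)"
    using assms by (simp add: B_const_def power_mult_distrib power2_eq_square powr_add[symmetric])
  also have "\<dots> = ((real n + 1) / (2 * real n))^2 * ((real n + 1) / (real n - 1)) ^ (n - 1)"
    using assms powr_realpow[of "(real n + 1) / (real n - 1)" "n - 1"] by (simp add: of_nat_diff)
  finally have B: "(B_const n)^2 = ((real n + 1) / (2 * real n))^2 * (P / Q)"
    by (simp add: P_def Q_def power_divide)
  have "n + 1 = 2 + (n - 1)" using assms by simp
  then have "(real n / (real n + 1)) ^ (n + 1) = real n * A / ((real n + 1)^2 * P)"
    unfolding A_def P_def power_divide by (metis power_Suc Suc_eq_plus1 power_add)
  moreover have "A / Q = 4 * (real n * A / (s^2 * P)) * (real n * ((s / (2 * real n))^2 * (P / Q)))"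
    if "s > 0" for s
    using that pos by (simp add: field_simps power2_eq_square)
  ultimately show ?thesis
    unfolding B A_def[symmetric] Q_def[symmetric] by simp
qed

lemma B_const_bounds:
  assumes "n \<ge> 2"
  shows "32 / 27 * real n * (B_const n)^2 \<le> real n ^ n / (real n - 1) ^ (n - 1)"
    and "real n ^ n / (real n - 1) ^ (n - 1) \<le> 4 / exp 1 * real n * (B_const n)^2"
proof -
  have nonneg: "real n * (B_const n)^2 \<ge> 0" by simp
  show "32 / 27 * real n * (B_const n)^2 \<le> real n ^ n / (real n - 1) ^ (n - 1)"
    unfolding B_const_square_identity[OF assms]
    using mult_right_mono[OF power_ratio_ge_8_27[OF assms] nonneg] by simp
  have "4 * (real n / (real n + 1)) ^ (n + 1) * (real n * (B_const n)^2)
      \<le> 4 * exp (- 1) * (real n * (B_const n)^2)"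
    using mult_right_mono[OF power_ratio_le_exp_minus_1[of n] nonneg] by simp
  also have "\<dots> = 4 / exp 1 * real n * (B_const n)^2"
    by (simp add: exp_minus divide_inverse)
  finally show "real n ^ n / (real n - 1) ^ (n - 1) \<le> 4 / exp 1 * real n * (B_const n)^2"
    unfolding B_const_square_identity[OF assms] .
qed

theorem proposition4p1:
  fixes f :: "complex \<Rightarrow> complex" and b :: "nat \<Rightarrow> complex"
  assumes "f holomorphic_on ball 0 1"
    and "\<And>z. z \<in> ball 0 1 \<Longrightarrow> (\<lambda>k. b k * z ^ k) sums f z"
    and "b 0 = 0"
    and "f \<in> bloch_space" and "bloch_norm f \<le> 1"
  shows "(\<forall>n\<ge>2. (\<Sum>k=1..n. real k * (cmod (b k))^2) \<le> real n ^ n / (real n - 1) ^ (n - 1))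
    \<and> (\<forall>n\<ge>2. 32 / 27 * real n * (B_const n)^2 \<le> real n ^ n / (real n - 1) ^ (n - 1)
             \<and> real n ^ n / (real n - 1) ^ (n - 1) \<le> 4 / exp 1 * real n * (B_const n)^2)"
proof -
  have bloch: "(1 - (cmod z)^2) * cmod (deriv f z) \<le> 1" if "z \<in> ball 0 1" for z
    using bloch_norm_ge[OF assms(4) that] assms(5) norm_ge_zero[of "f 0"] by linarith
  show ?thesis
    using bloch_weighted_coeff_sum_le[OF assms(2) bloch] B_const_bounds by blast
qed

end
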